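(* Let $(S,\sqcup,\cap)$ be an ado-semilattice. Then for all $a,b,c\in S$: (1) $a\sqcup b=b\sqcup a$ if and only if $a$ and $b$ have an upper bound in $(S,\leq)$; (2) $a\cap((a\cap b)\sqcup c)=a\cap((a\cap c)\sqcup b)$.
   Context: An o-semilattice is an algebra $(L,\cap,\sqcup)$ such that $(L,\cap)$ is a semilattice and, with $x\leq y$ iff $x=x\cap y$, for all $x,y,z$: (i) $x\leq x\sqcup y$; (ii) $(x\cap y)\sqcup(y\cap z)\leq y$; (iii) $x\sqcup y\leq x\sqcup(y\cap(x\sqcup y))$; (iv) $x\cap z\leq(x\cap y)\sqcup z$. It is distributive if $(a\cap d)\sqcup((b\cap d)\cap(c\cap d))=((a\cap d)\sqcup(b\cap d))\cap((a\cap d)\sqcup(c\cap d))$ for all $a,b,c,d$. An ado-semilattice is a distributive o-semilattice in which $\sqcup$ is associative. Here $\leq$ is the semilattice order $x\leq y$ iff $x=x\cap y$. *)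

theory Defs
  imports Main
begin

definition is_semilattice :: "('a \<Rightarrow> 'a \<Rightarrow> 'a) \<Rightarrow> bool" where
  "is_semilattice m \<longleftrightarrow>
     (\<forall>x y z. m (m x y) z = m x (m y z)) \<and>
     (\<forall>x y. m x y = m y x) \<and>
     (\<forall>x. m x x = x)"

definition sl_le :: "('a \<Rightarrow> 'a \<Rightarrow> 'a) \<Rightarrow> 'a \<Rightarrow> 'a \<Rightarrow> bool" where
  "sl_le m x y \<longleftrightarrow> x = m x y"

definition o_semilattice :: "('a \<Rightarrow> 'a \<Rightarrow> 'a) \<Rightarrow> ('a \<Rightarrow> 'a \<Rightarrow> 'a) \<Rightarrow> bool" where
  "o_semilattice m j \<longleftrightarrow> is_semilattice m \<and>
     (\<forall>x y. sl_le m x (j x y)) \<and>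
     (\<forall>x y z. sl_le m (j (m x y) (m y z)) y) \<and>
     (\<forall>x y. sl_le m (j x y) (j x (m y (j x y)))) \<and>
     (\<forall>x y z. sl_le m (m x z) (j (m x y) z))"

definition distributive_o_semilattice :: "('a \<Rightarrow> 'a \<Rightarrow> 'a) \<Rightarrow> ('a \<Rightarrow> 'a \<Rightarrow> 'a) \<Rightarrow> bool" where
  "distributive_o_semilattice m j \<longleftrightarrow> o_semilattice m j \<and>
     (\<forall>a b c d. j (m a d) (m (m b d) (m c d)) = m (j (m a d) (m b d)) (j (m a d) (m c d)))"

definition ado_semilattice :: "('a \<Rightarrow> 'a \<Rightarrow> 'a) \<Rightarrow> ('a \<Rightarrow> 'a \<Rightarrow> 'a) \<Rightarrow> bool" where
  "ado_semilattice m j \<longleftrightarrow> distributive_o_semilattice m j \<and>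
     (\<forall>x y z. j (j x y) z = j x (j y z))"

end

theory Submission
  imports Defs
begin

text \<open>Axiom (ii) makes \<open>x \<squnion> y\<close> a least upper bound of \<open>x\<close> and \<open>y\<close> as soon as it is an upper
  bound at all, and axiom (iv) shows that it is one whenever \<open>x\<close> and \<open>y\<close> have some common upper
  bound \<open>u\<close>. So bounded pairs have a symmetric join, while a commuting join is itself a common
  upper bound; this is (1). For (2), let \<open>p = a \<sqinter> b\<close> and \<open>r = a \<sqinter> (p \<squnion> c)\<close>. By axiom (iii)
  and associativity \<open>p \<squnion> c = p \<squnion> c'\<close> with \<open>c' = c \<sqinter> (p \<squnion> c)\<close>, so \<open>p\<close>, \<open>r\<close> and \<open>c'\<close> all lie
  below \<open>p \<squnion> c\<close>, where distributivity applies and gives \<open>r = p \<squnion> (r \<sqinter> c')\<close>. Comparing with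
  \<open>(a \<sqinter> b) \<squnion> (a \<sqinter> c)\<close> yields \<open>r = (a \<sqinter> b) \<squnion> (a \<sqinter> c)\<close>, which is symmetric in \<open>b\<close>
  and \<open>c\<close> by (1).\<close>

locale o_semilat =
  fixes meet :: "'a \<Rightarrow> 'a \<Rightarrow> 'a"  (infixl \<open>\<sqinter>\<close> 70)
    and join :: "'a \<Rightarrow> 'a \<Rightarrow> 'a"  (infixl \<open>\<squnion>\<close> 65)
  assumes o_semilattice: "o_semilattice (\<sqinter>) (\<squnion>)"
begin

abbreviation le :: "'a \<Rightarrow> 'a \<Rightarrow> bool"  (infix \<open>\<sqsubseteq>\<close> 50)
  where "x \<sqsubseteq> y \<equiv> sl_le (\<sqinter>) x y"

sublocale meet: semilattice_order "(\<sqinter>)" "(\<sqsubseteq>)" "\<lambda>x y. x \<sqsubseteq> y \<and> x \<noteq> y"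
  using o_semilattice
  by unfold_locales (auto simp: o_semilattice_def is_semilattice_def sl_le_def)

lemma join_upper1: "x \<sqsubseteq> x \<squnion> y"
  using o_semilattice by (simp add: o_semilattice_def)

lemma join_meets_le: "x \<sqinter> y \<squnion> y \<sqinter> z \<sqsubseteq> y"
  using o_semilattice by (simp add: o_semilattice_def)

lemma join_le_join_meet_join: "x \<squnion> y \<sqsubseteq> x \<squnion> (y \<sqinter> (x \<squnion> y))"
  using o_semilattice by (simp add: o_semilattice_def)

lemma meet_le_join_meet: "x \<sqinter> z \<sqsubseteq> x \<sqinter> y \<squnion> z"
  using o_semilattice by (simp add: o_semilattice_def)

lemma join_least: "x \<sqsubseteq> u \<Longrightarrow> y \<sqsubseteq> u \<Longrightarrow> x \<squnion> y \<sqsubseteq> u"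
  using join_meets_le [of x u y] by (simp add: meet.absorb1 meet.absorb2)

lemma join_upper2_bounded: "x \<sqsubseteq> u \<Longrightarrow> y \<sqsubseteq> u \<Longrightarrow> y \<sqsubseteq> x \<squnion> y"
  using meet_le_join_meet [of u y x] by (simp add: meet.absorb2)

lemma join_commute_bounded: "x \<sqsubseteq> u \<Longrightarrow> y \<sqsubseteq> u \<Longrightarrow> x \<squnion> y = y \<squnion> x"
  by (blast intro: meet.antisym join_least join_upper1 join_upper2_bounded)

lemma join_commute_iff_bounded: "x \<squnion> y = y \<squnion> x \<longleftrightarrow> (\<exists>u. x \<sqsubseteq> u \<and> y \<sqsubseteq> u)"
proof
  assume "x \<squnion> y = y \<squnion> x"
  then have "y \<sqsubseteq> x \<squnion> y"
    by (metis join_upper1)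
  then show "\<exists>u. x \<sqsubseteq> u \<and> y \<sqsubseteq> u"
    using join_upper1 by blast
qed (blast intro: join_commute_bounded)

lemma join_absorb2: "x \<sqsubseteq> y \<Longrightarrow> x \<squnion> y = y"
  by (blast intro: meet.antisym meet.refl join_least join_upper2_bounded)

end

locale ado_semilat = o_semilat +
  assumes join_meet_distrib:
      "a \<sqinter> d \<squnion> (b \<sqinter> d \<sqinter> (c \<sqinter> d)) = (a \<sqinter> d \<squnion> b \<sqinter> d) \<sqinter> (a \<sqinter> d \<squnion> c \<sqinter> d)"
    and join_assoc: "x \<squnion> y \<squnion> z = x \<squnion> (y \<squnion> z)"
begin

lemma join_meet_distrib_bounded:
  assumes "x \<sqsubseteq> u" "y \<sqsubseteq> u" "z \<sqsubseteq> u"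
  shows "x \<squnion> (y \<sqinter> z) = (x \<squnion> y) \<sqinter> (x \<squnion> z)"
  using join_meet_distrib [of x u y z] assms by (simp add: meet.absorb1)

lemma join_mono_right: "y \<sqsubseteq> z \<Longrightarrow> x \<squnion> y \<sqsubseteq> x \<squnion> z"
  using join_upper1 [of "x \<squnion> y" z] by (simp add: join_assoc join_absorb2)

lemma join_eq_join_meet_join: "x \<squnion> y = x \<squnion> (y \<sqinter> (x \<squnion> y))"
  by (blast intro: meet.antisym join_le_join_meet_join join_mono_right meet.cobounded1)

lemma meet_join_meet_eq: "a \<sqinter> (a \<sqinter> b \<squnion> c) = a \<sqinter> b \<squnion> a \<sqinter> c"
proof (rule meet.antisym)
  define p where "p = a \<sqinter> b"
  define r where "r = a \<sqinter> (p \<squnion> c)"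
  define c' where "c' = c \<sqinter> (p \<squnion> c)"
  have "p \<sqsubseteq> r"
    unfolding p_def r_def by (simp add: join_upper1)
  have below: "p \<sqsubseteq> p \<squnion> c" "r \<sqsubseteq> p \<squnion> c" "c' \<sqsubseteq> p \<squnion> c"
    unfolding r_def c'_def by (simp_all add: join_upper1)
  have "p \<squnion> (r \<sqinter> c') = (p \<squnion> r) \<sqinter> (p \<squnion> c')"
    using below by (rule join_meet_distrib_bounded)
  also have "\<dots> = r \<sqinter> (p \<squnion> c)"
    unfolding c'_def join_absorb2 [OF \<open>p \<sqsubseteq> r\<close>] by (simp flip: join_eq_join_meet_join)
  also have "\<dots> = r"
    using below by (simp add: meet.absorb1)
  finally have "r = p \<squnion> (r \<sqinter> c')" ..
  moreover have "r \<sqinter> c' \<sqsubseteq> a \<sqinter> c"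
    unfolding r_def c'_def by (rule meet.mono) simp_all
  ultimately show "r \<sqsubseteq> p \<squnion> a \<sqinter> c"
    by (metis join_mono_right)
  show "p \<squnion> a \<sqinter> c \<sqsubseteq> r"
    unfolding p_def r_def by (simp add: join_least join_mono_right)
qed

lemma meet_join_meet_swap: "a \<sqinter> (a \<sqinter> b \<squnion> c) = a \<sqinter> (a \<sqinter> c \<squnion> b)"
  using join_commute_bounded [of "a \<sqinter> b" a "a \<sqinter> c"] by (simp add: meet_join_meet_eq)

end

theorem lemma3p4:
  fixes meet join :: "'a \<Rightarrow> 'a \<Rightarrow> 'a"
  assumes "ado_semilattice meet join"
  shows "(\<forall>a b. (join a b = join b a \<longleftrightarrow> (\<exists>u. sl_le meet a u \<and> sl_le meet b u))) \<and>
         (\<forall>a b c. meet a (join (meet a b) c) = meet a (join (meet a c) b))"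
proof -
  interpret ado_semilat meet join
    using assms
    by unfold_locales (auto simp: ado_semilattice_def distributive_o_semilattice_def)
  show ?thesis
    using join_commute_iff_bounded meet_join_meet_swap by blast
qed

end
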